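(* Let $\alpha=(x,u')$ and $\beta=(y,v')$ be points of $\mathcal{S}$ with $x\neq y$, $u'\neq v'$, and either ($u'\in y'^{\perp}$ and $v'\notin x'^{\perp}$) or ($u'\notin y'^{\perp}$ and $v'\in x'^{\perp}$) (perps in $S'$). Then $d(\alpha,\beta)=3$, where $d$ is the distance in the collinearity graph of $\mathcal{S}$.
   Context: Let $S=(P,L)$ and $S'=(P',L')$ be generalized quadrangles of order $(2,2)$ (every line has 3 points, every point lies on 3 lines, and for each point $x$ and line $l\not\ni x$ exactly one point of $l$ is collinear with $x$), with an isomorphism $x\mapsto x'$ from $S$ to $S'$. In a point-line geometry, $x^{\perp}$ is $x$ together with all points collinear with $x$, and $A^{\perp}=\bigcap_{a\in A}a^{\perp}$. A triad is a set of three pairwise non-collinear points, complete if $|T^{\perp}|=3$. The geometry $\mathcal{S}=(\mathcal{P},\mathcal{L})$ has point set $\mathcal{P}=\{(x,y')\in P\times P':y'\in x'^{\perp}\}$ and lines all $3$-subsets $\{(x,u'),(y,v'),(z,w')\}$ of $\mathcal{P}$ where $T=\{x,y,z\}$ (three distinct points) is a line or a complete triad of $S$ and $\{u',v',w'\}=T'^{\perp}$ in $S'$ with $u',v',w'$ distinct. *)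

theory Defs
  imports Main
begin

definition perp :: "'p set \<Rightarrow> 'p set set \<Rightarrow> 'p \<Rightarrow> 'p set" where
  "perp P L x = {y \<in> P. y = x \<or> (\<exists>l\<in>L. x \<in> l \<and> y \<in> l)}"

definition setperp :: "'p set \<Rightarrow> 'p set set \<Rightarrow> 'p set \<Rightarrow> 'p set" where
  "setperp P L A = {y \<in> P. \<forall>a\<in>A. y \<in> perp P L a}"

definition collinear :: "'p set set \<Rightarrow> 'p \<Rightarrow> 'p \<Rightarrow> bool" where
  "collinear L x y \<longleftrightarrow> (\<exists>l\<in>L. x \<in> l \<and> y \<in> l)"

definition gq22 :: "'p set \<Rightarrow> 'p set set \<Rightarrow> bool" where
  "gq22 P L \<longleftrightarrow>
     (\<forall>l\<in>L. l \<subseteq> P \<and> card l = 3) \<and>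
     (\<forall>x\<in>P. card {l\<in>L. x \<in> l} = 3) \<and>
     (\<forall>x\<in>P. \<forall>l\<in>L. x \<notin> l \<longrightarrow> (\<exists>!y. y \<in> l \<and> collinear L x y))"

definition geom_iso :: "('p \<Rightarrow> 'q) \<Rightarrow> 'p set \<Rightarrow> 'p set set \<Rightarrow> 'q set \<Rightarrow> 'q set set \<Rightarrow> bool" where
  "geom_iso f P L P' L' \<longleftrightarrow> bij_betw f P P' \<and> (\<lambda>l. f ` l) ` L = L'"

definition triad :: "'p set \<Rightarrow> 'p set set \<Rightarrow> 'p set \<Rightarrow> bool" where
  "triad P L T \<longleftrightarrow> T \<subseteq> P \<and> card T = 3 \<and>
     (\<forall>a\<in>T. \<forall>b\<in>T. a \<noteq> b \<longrightarrow> \<not> collinear L a b)"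

definition complete_triad :: "'p set \<Rightarrow> 'p set set \<Rightarrow> 'p set \<Rightarrow> bool" where
  "complete_triad P L T \<longleftrightarrow> triad P L T \<and> card (setperp P L T) = 3"

definition bigPoints :: "'p set \<Rightarrow> 'p set set \<Rightarrow> 'q set \<Rightarrow> 'q set set \<Rightarrow> ('p \<Rightarrow> 'q) \<Rightarrow> ('p \<times> 'q) set" where
  "bigPoints P L P' L' f = {(x, y). x \<in> P \<and> y \<in> perp P' L' (f x)}"

definition bigLines :: "'p set \<Rightarrow> 'p set set \<Rightarrow> 'q set \<Rightarrow> 'q set set \<Rightarrow> ('p \<Rightarrow> 'q) \<Rightarrow> ('p \<times> 'q) set set" where
  "bigLines P L P' L' f =
    {{(x, u), (y, v), (z, w)} | x y z u v w.
        distinct [x, y, z] \<and>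
        ({x, y, z} \<in> L \<or> complete_triad P L {x, y, z}) \<and>
        distinct [u, v, w] \<and>
        {u, v, w} = setperp P' L' (f ` {x, y, z}) \<and>
        {(x, u), (y, v), (z, w)} \<subseteq> bigPoints P L P' L' f}"

definition bigAdj :: "'p set \<Rightarrow> 'p set set \<Rightarrow> 'q set \<Rightarrow> 'q set set \<Rightarrow> ('p \<Rightarrow> 'q) \<Rightarrow> (('p \<times> 'q) \<times> ('p \<times> 'q)) set" where
  "bigAdj P L P' L' f = {(a, b). a \<noteq> b \<and> (\<exists>l\<in>bigLines P L P' L' f. a \<in> l \<and> b \<in> l)}"

definition graph_dist_is :: "('a \<times> 'a) set \<Rightarrow> 'a \<Rightarrow> 'a \<Rightarrow> nat \<Rightarrow> bool" where
  "graph_dist_is E a b n \<longleftrightarrow> (a, b) \<in> E ^^ n \<and> (\<forall>m<n. (a, b) \<notin> E ^^ m)"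

end

(*
  Adjacency in the geometry \<S> can be read off in S' alone: (x, u) and (y, v) are
  adjacent iff f x, f y are distinct points of a line or complete triad T of S' and
  u, v are distinct points of T^perp.  Hence v is collinear with f x whenever (x, u)
  and (y, v) are adjacent, which rules out distance 1.

  A common neighbour (z, w) would make f x, f y, f z collinear with both u and w.
  If u and w are collinear, all these points lie on the line u w.  Otherwise we use
  that every pair of non-collinear points of a GQ(2,2) is regular: {u, w}^perp^perp
  equals {Y, Z}^perp for any two distinct Y, Z in {u, w}^perp (a counting argument on
  the three lines through a point).  Either way v, being collinear with f y and f z,
  would be collinear with f x, which rules out distance 2.

  A path of length 3 is built inside S' by distinguishing whether f x and f y are
  collinear, moving along lines and along the complete triads {a, b}^perp and
  {a, b}^perp^perp.
*)
theory Submission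
  imports Defs
begin

lemma card_3_avoid_two:
  assumes "card A = 3"
  obtains c where "c \<in> A" "c \<noteq> a" "c \<noteq> b"
proof -
  have "\<not> A \<subseteq> {a, b}"
  proof
    assume "A \<subseteq> {a, b}"
    then have "card A \<le> card {a, b}"
      by (simp add: card_mono)
    also have "\<dots> \<le> 2"
      by (cases "a = b") simp_all
    finally show False
      using assms by simp
  qed
  then show ?thesis
    using that by blast
qed

lemma card_3_obtain_third:
  assumes "card A = 3" "a \<in> A" "b \<in> A" "a \<noteq> b"
  obtains c where "A = {a, b, c}" "c \<noteq> a" "c \<noteq> b"
proof -
  obtain c where c: "c \<in> A" "c \<noteq> a" "c \<noteq> b"
    using card_3_avoid_two[OF assms(1)] .
  have "finite A"
    using assms(1) by (metis card.infinite zero_neq_numeral)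
  moreover have "card {a, b, c} = card A"
    using assms c by simp
  ultimately have "{a, b, c} = A"
    using assms(2,3) c(1) by (intro card_seteq) auto
  then show ?thesis
    using that c by blast
qed

lemma relpow_converse_of_sym:
  assumes "sym E"
  shows "(E ^^ n)\<inverse> = E ^^ n"
proof (induction n)
  case (Suc n)
  have "(E ^^ Suc n)\<inverse> = E\<inverse> O (E ^^ n)\<inverse>"
    by (simp add: converse_relcomp)
  also have "\<dots> = E O E ^^ n"
    using Suc assms by (simp add: sym_conv_converse_eq)
  also have "\<dots> = E ^^ Suc n"
    by (metis relpow.simps(2) relpow_commute)
  finally show ?case .
qed simp

lemma graph_dist_is_sym:
  assumes "sym E" "graph_dist_is E a b n"
  shows "graph_dist_is E b a n"
proof -
  have "(b, a) \<in> E ^^ m \<longleftrightarrow> (a, b) \<in> E ^^ m" for m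
    using relpow_converse_of_sym[OF assms(1), of m] by blast
  then show ?thesis
    using assms(2) unfolding graph_dist_is_def by simp
qed

lemma graph_dist_is_3I:
  assumes "a \<noteq> b" "(a, b) \<notin> E" "(a, b) \<notin> E O E" "(a, b) \<in> E O E O E"
  shows "graph_dist_is E a b 3"
  unfolding graph_dist_is_def
proof (intro conjI allI impI)
  show "(a, b) \<in> E ^^ 3"
    using assms(4) by (simp add: numeral_3_eq_3 O_assoc)
  fix m :: nat
  assume "m < 3"
  then consider "m = 0" | "m = 1" | "m = 2"
    by linarith
  then show "(a, b) \<notin> E ^^ m"
    by cases (use assms in \<open>simp_all add: numeral_2_eq_2\<close>)
qed

lemma collinear_commute: "collinear L x y \<longleftrightarrow> collinear L y x"
  unfolding collinear_def by blast

lemma mem_perp_iff: "y \<in> perp P L x \<longleftrightarrow> y \<in> P \<and> (y = x \<or> collinear L x y)"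
  unfolding perp_def collinear_def by blast

lemma perp_subset: "perp P L x \<subseteq> P"
  unfolding perp_def by blast

lemma perp_Int_points [simp]: "perp P L x \<inter> P = perp P L x"
  using perp_subset by (rule Int_absorb2)

lemma perp_sym: "x \<in> P \<Longrightarrow> y \<in> perp P L x \<Longrightarrow> x \<in> perp P L y"
  unfolding mem_perp_iff collinear_def by blast

lemma perp_commute: "x \<in> P \<Longrightarrow> y \<in> P \<Longrightarrow> x \<in> perp P L y \<longleftrightarrow> y \<in> perp P L x"
  using perp_sym by metis

lemma setperp_empty [simp]: "setperp P L {} = P"
  unfolding setperp_def by blast

lemma setperp_insert [simp]: "setperp P L (insert a A) = perp P L a \<inter> setperp P L A"
  unfolding setperp_def perp_def by blast

lemma setperp_subset: "setperp P L A \<subseteq> P"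
  unfolding setperp_def by blast

lemma setperp_antimono: "A \<subseteq> B \<Longrightarrow> setperp P L B \<subseteq> setperp P L A"
  unfolding setperp_def by blast

lemma mem_setperp_iff_subset_perp:
  assumes "y \<in> P" "A \<subseteq> P"
  shows "y \<in> setperp P L A \<longleftrightarrow> A \<subseteq> perp P L y"
proof -
  have "y \<in> perp P L a \<longleftrightarrow> a \<in> perp P L y" if "a \<in> A" for a
    by (simp add: perp_commute[OF assms(1)] subsetD[OF assms(2) that])
  then show ?thesis
    using assms(1) unfolding setperp_def by blast
qed

lemma subset_setperp_setperp:
  assumes "A \<subseteq> P"
  shows "A \<subseteq> setperp P L (setperp P L A)"
proof
  fix a
  assume a: "a \<in> A"
  have "setperp P L A \<subseteq> perp P L a"
    using a unfolding setperp_def by blast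
  moreover have "a \<in> P"
    using a assms by blast
  ultimately show "a \<in> setperp P L (setperp P L A)"
    by (simp add: mem_setperp_iff_subset_perp setperp_subset)
qed

section \<open>Generalized quadrangles of order (2,2)\<close>

locale gq22_geom =
  fixes P :: "'a set" and L :: "'a set set"
  assumes gq22: "gq22 P L"
begin

lemma line_subset: "l \<in> L \<Longrightarrow> l \<subseteq> P"
  and card_line: "l \<in> L \<Longrightarrow> card l = 3"
  and card_lines_through: "x \<in> P \<Longrightarrow> card {l \<in> L. x \<in> l} = 3"
  and ex1_collinear_on_line: "x \<in> P \<Longrightarrow> l \<in> L \<Longrightarrow> x \<notin> l \<Longrightarrow> \<exists>!y. y \<in> l \<and> collinear L x y"
  using gq22 unfolding gq22_def by simp_all

lemma finite_lines_through: "x \<in> P \<Longrightarrow> finite {l \<in> L. x \<in> l}"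
  using card_lines_through by (metis card.infinite zero_neq_numeral)

lemma collinear_refl:
  assumes "x \<in> P"
  shows "collinear L x x"
proof -
  have "{l \<in> L. x \<in> l} \<noteq> {}"
    using card_lines_through[OF assms] by (metis card.empty zero_neq_numeral)
  then show ?thesis
    unfolding collinear_def by blast
qed

lemma noncollinear_imp_neq: "x \<in> P \<Longrightarrow> \<not> collinear L x y \<Longrightarrow> x \<noteq> y"
  using collinear_refl by blast

lemma mem_perp_iff_collinear: "x \<in> P \<Longrightarrow> y \<in> P \<Longrightarrow> y \<in> perp P L x \<longleftrightarrow> collinear L x y"
  using collinear_refl by (auto simp: mem_perp_iff)

lemma perp_if_on_line: "l \<in> L \<Longrightarrow> x \<in> l \<Longrightarrow> y \<in> l \<Longrightarrow> y \<in> perp P L x"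
  using line_subset unfolding mem_perp_iff collinear_def by blast

lemma collinear_on_line_unique:
  "x \<in> P \<Longrightarrow> l \<in> L \<Longrightarrow> x \<notin> l \<Longrightarrow> y \<in> l \<Longrightarrow> z \<in> l \<Longrightarrow>
    collinear L x y \<Longrightarrow> collinear L x z \<Longrightarrow> y = z"
  using ex1_collinear_on_line by blast

lemma mem_line_if_perp_two:
  assumes "l \<in> L" "a \<in> l" "b \<in> l" "a \<noteq> b" "c \<in> perp P L a" "c \<in> perp P L b"
  shows "c \<in> l"
proof (rule ccontr)
  assume "c \<notin> l"
  moreover have "c \<in> P"
    using assms(5) perp_subset by fast
  moreover have "collinear L c a" "collinear L c b"
    using assms \<open>c \<notin> l\<close> by (auto simp: mem_perp_iff collinear_commute)
  ultimately show False
    using collinear_on_line_unique[of c l a b] assms(1-4) by blast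
qed

lemma line_eqI:
  assumes "l \<in> L" "m \<in> L" "a \<noteq> b" "a \<in> l" "b \<in> l" "a \<in> m" "b \<in> m"
  shows "l = m"
proof -
  have "m \<subseteq> l"
  proof
    fix z
    assume "z \<in> m"
    then show "z \<in> l"
      using mem_line_if_perp_two[OF assms(1,4,5,3)] perp_if_on_line assms(2,6,7) by blast
  qed
  moreover have "finite l" "card m = card l"
    using assms(1,2) card_line by (auto intro: card_ge_0_finite)
  ultimately show ?thesis
    using card_seteq by (metis order_refl)
qed

definition line_through :: "'a \<Rightarrow> 'a \<Rightarrow> 'a set" where
  "line_through x y = (THE l. l \<in> L \<and> x \<in> l \<and> y \<in> l)"

lemma line_through_eq:
  assumes "l \<in> L" "x \<in> l" "y \<in> l" "x \<noteq> y"
  shows "line_through x y = l"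
  unfolding line_through_def
  using assms line_eqI by (intro the_equality) blast+

lemma line_through:
  assumes "collinear L x y" "x \<noteq> y"
  shows "line_through x y \<in> L" "x \<in> line_through x y" "y \<in> line_through x y"
  using assms line_through_eq unfolding collinear_def by metis+

lemma setperp_line: "l \<in> L \<Longrightarrow> setperp P L l = l"
proof -
  assume l: "l \<in> L"
  obtain a b where ab: "a \<in> l" "b \<in> l" "a \<noteq> b"
    using card_line[OF l] by (metis card_3_avoid_two)
  have "setperp P L l \<subseteq> l"
    using mem_line_if_perp_two[OF l ab] ab unfolding setperp_def by blast
  moreover have "l \<subseteq> setperp P L l"
    using l line_subset perp_if_on_line unfolding setperp_def by blast
  ultimately show ?thesis
    by (rule equalityI)
qed

lemma collinear_third_point:
  assumes "l \<in> L" "l = {a, b, c}" "x \<in> P" "x \<notin> l"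
    "\<not> collinear L x a" "\<not> collinear L x b"
  shows "collinear L x c"
  using ex1_collinear_on_line[OF assms(3,1,4)] assms(2,5,6) by blast

lemma setperp2_neq:
  assumes "a \<in> P" "\<not> collinear L a b" "y \<in> setperp P L {a, b}"
  shows "y \<noteq> a" "y \<noteq> b"
  using assms collinear_refl by (auto simp: mem_perp_iff collinear_commute)

lemma setperp2_noncollinear:
  assumes "u \<in> P" "w \<in> P" "\<not> collinear L u w"
    "y \<in> setperp P L {u, w}" "z \<in> setperp P L {u, w}" "y \<noteq> z"
  shows "\<not> collinear L y z"
proof
  assume "collinear L y z"
  then have l: "line_through y z \<in> L" "y \<in> line_through y z" "z \<in> line_through y z"
    using line_through assms(6) by blast+
  have "u \<in> perp P L y" "u \<in> perp P L z" "w \<in> perp P L y" "w \<in> perp P L z"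
    using assms(1,2,4,5) perp_sym by auto
  then have "u \<in> line_through y z" "w \<in> line_through y z"
    using mem_line_if_perp_two[OF l(1,2,3) assms(6)] by blast+
  then show False
    using assms(3) l(1) unfolding collinear_def by blast
qed

lemma card_setperp2:
  assumes a: "a \<in> P" and b: "b \<in> P" and ab: "\<not> collinear L a b"
  shows "card (setperp P L {a, b}) = 3"
proof -
  have b_notin: "b \<notin> l" if "l \<in> L" "a \<in> l" for l
    using that ab unfolding collinear_def by blast
  have col: "collinear L a y" "collinear L b y" "a \<noteq> y" if "y \<in> setperp P L {a, b}" for y
    using that setperp2_neq[OF a ab that] by (auto simp: mem_perp_iff)
  have "bij_betw (line_through a) (setperp P L {a, b}) {l \<in> L. a \<in> l}"
  proof (rule bij_betw_imageI)
    show "inj_on (line_through a) (setperp P L {a, b})"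
    proof (rule inj_onI)
      fix y z
      assume y: "y \<in> setperp P L {a, b}" and z: "z \<in> setperp P L {a, b}"
        and eq: "line_through a y = line_through a z"
      note ly = line_through[OF col(1,3)[OF y]]
      have "z \<in> line_through a y"
        using line_through(3)[OF col(1,3)[OF z]] eq by simp
      then show "y = z"
        using collinear_on_line_unique[OF b ly(1) b_notin[OF ly(1,2)] ly(3)] col(2) y z
        by blast
    qed
    show "line_through a ` setperp P L {a, b} = {l \<in> L. a \<in> l}"
    proof (intro equalityI subsetI)
      fix l
      assume "l \<in> line_through a ` setperp P L {a, b}"
      then show "l \<in> {l \<in> L. a \<in> l}"
        using line_through(1,2)[OF col(1,3)] by blast
    next
      fix l
      assume l: "l \<in> {l \<in> L. a \<in> l}"
      then obtain y where y: "y \<in> l" "collinear L b y"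
        using ex1_collinear_on_line[OF b] b_notin by blast
      have "y \<in> perp P L a" "y \<in> perp P L b"
        using l y perp_if_on_line line_subset by (auto simp: mem_perp_iff)
      then have y_perp: "y \<in> setperp P L {a, b}"
        by simp
      moreover have "line_through a y = l"
        using l y(1) col(3)[OF y_perp] by (intro line_through_eq) auto
      ultimately show "l \<in> line_through a ` setperp P L {a, b}"
        by blast
    qed
  qed
  then show ?thesis
    using card_lines_through[OF a] bij_betw_same_card by metis
qed

subsection \<open>Regularity\<close>

lemma card_noncollinear_neighbours_le:
  assumes x: "x \<in> P" and Y: "Y \<subseteq> perp P L x - {x}"
    and noncol: "\<And>y z. y \<in> Y \<Longrightarrow> z \<in> Y \<Longrightarrow> y \<noteq> z \<Longrightarrow> \<not> collinear L y z"
  shows "card Y \<le> 3"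
proof -
  have col: "collinear L x y" "x \<noteq> y" if "y \<in> Y" for y
    using that Y by (auto simp: mem_perp_iff)
  have "inj_on (line_through x) Y"
  proof (rule inj_onI)
    fix y z
    assume "y \<in> Y" "z \<in> Y" "line_through x y = line_through x z"
    then show "y = z"
      using noncol line_through[OF col] unfolding collinear_def by metis
  qed
  moreover have "line_through x ` Y \<subseteq> {l \<in> L. x \<in> l}"
    using line_through col by blast
  ultimately have "card Y \<le> card {l \<in> L. x \<in> l}"
    using card_inj_on_le finite_lines_through[OF x] by blast
  then show ?thesis
    using card_lines_through[OF x] by simp
qed

lemma no_four_noncollinear_neighbours:
  assumes x: "x \<in> P" and Y: "{y1, y2, y3, y4} \<subseteq> P"
    and "collinear L x y1" "collinear L x y2" "collinear L x y3" "collinear L x y4"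
    and "\<not> collinear L y1 y2" "\<not> collinear L y1 y3" "\<not> collinear L y1 y4"
      "\<not> collinear L y2 y3" "\<not> collinear L y2 y4" "\<not> collinear L y3 y4"
  shows False
proof -
  let ?Y = "{y1, y2, y3, y4}"
  have "?Y \<subseteq> perp P L x - {x}"
    using assms by (auto simp: mem_perp_iff collinear_commute)
  moreover have "\<not> collinear L y z" if "y \<in> ?Y" "z \<in> ?Y" "y \<noteq> z" for y z
    using that assms(7-12) by (auto simp: collinear_commute)
  ultimately have "card ?Y \<le> 3"
    using card_noncollinear_neighbours_le[OF x] by blast
  moreover have "card ?Y = 4"
    using Y assms(7-12) noncollinear_imp_neq by (simp add: collinear_commute)
  ultimately show False
    by simp
qed

lemma not_collinear_if_perp_on_line:
  assumes "l \<in> L" "x \<in> l" "z \<in> l" "w \<in> l" "x \<noteq> w"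
    "y \<in> perp P L x" "y \<notin> perp P L z"
  shows "\<not> collinear L y w"
proof
  assume "collinear L y w"
  then have "y \<in> perp P L w"
    using assms(6) by (auto simp: mem_perp_iff collinear_commute)
  then have "y \<in> l"
    using mem_line_if_perp_two[OF assms(1,2,4,5) assms(6)] by blast
  then show False
    using assms(1,3,7) perp_if_on_line by blast
qed

lemma third_point_collinear:
  assumes x: "x \<in> P" "r \<in> perp P L x" "r \<noteq> x"
    and c: "c \<in> P" "c \<notin> perp P L r" "\<not> collinear L c x"
  obtains l x' where "l \<in> L" "x \<in> l" "r \<in> l" "x' \<in> l" "x' \<noteq> x" "x' \<noteq> r"
    "collinear L c x'"
proof -
  define l where "l = line_through x r"
  have "collinear L x r"
    using x(2,3) by (simp add: mem_perp_iff)
  then have l: "l \<in> L" "x \<in> l" "r \<in> l"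
    unfolding l_def using line_through x(3) by metis+
  obtain x' where x': "l = {x, r, x'}" "x' \<noteq> x" "x' \<noteq> r"
    using card_3_obtain_third[OF card_line[OF l(1)] l(2,3) x(3)[symmetric]] .
  have "c \<notin> l"
    using c(2) perp_if_on_line[OF l(1,3)] by blast
  moreover have "\<not> collinear L c r"
    using c(1,2) x(1,2) by (simp add: mem_perp_iff collinear_commute)
  ultimately have "collinear L c x'"
    using collinear_third_point[OF l(1) x'(1) c(1)] c(3) by blast
  then show ?thesis
    using that l x' by blast
qed

text \<open>If c were not collinear with r, it would be collinear with p, q and with the third
  points a', b' of the lines r a and r b.  These four points are pairwise non-collinear,
  so c would lie on four lines.\<close>
lemma regularity:
  assumes a: "a \<in> P" and b: "b \<in> P" and ab: "\<not> collinear L a b"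
    and p: "p \<in> setperp P L {a, b}" and q: "q \<in> setperp P L {a, b}" and pq: "p \<noteq> q"
    and r: "r \<in> setperp P L {a, b}" "r \<noteq> p" "r \<noteq> q"
    and c: "c \<in> setperp P L {p, q}" "c \<noteq> a" "c \<noteq> b"
  shows "c \<in> perp P L r"
proof (rule ccontr)
  assume cr: "c \<notin> perp P L r"
  have pts: "p \<in> P" "q \<in> P" "r \<in> P" "c \<in> P"
    using p q r c by (auto simp: mem_perp_iff)
  have ncpq: "\<not> collinear L p q" "\<not> collinear L p r" "\<not> collinear L q r"
    using setperp2_noncollinear[OF a b ab p q pq]
      setperp2_noncollinear[OF a b ab p r(1) r(2)[symmetric]]
      setperp2_noncollinear[OF a b ab q r(1) r(3)[symmetric]] .
  have "a \<in> setperp P L {p, q}" "b \<in> setperp P L {p, q}"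
    using perp_sym[OF a] perp_sym[OF b] p q by simp_all
  then have nc_c: "\<not> collinear L c a" "\<not> collinear L c b"
    using setperp2_noncollinear[OF pts(1,2) ncpq(1) c(1)] c(2,3) by (auto simp: collinear_commute)
  have r_perp: "r \<in> perp P L a" "r \<in> perp P L b" "r \<noteq> a" "r \<noteq> b"
    using r(1) setperp2_neq[OF a ab r(1)] by simp_all
  obtain la a' where la: "la \<in> L" "a \<in> la" "r \<in> la" "a' \<in> la" "a' \<noteq> a" "a' \<noteq> r"
      "collinear L c a'"
    using third_point_collinear[OF a r_perp(1,3) pts(4) cr nc_c(1)] .
  obtain lb b' where lb: "lb \<in> L" "b \<in> lb" "r \<in> lb" "b' \<in> lb" "b' \<noteq> b" "b' \<noteq> r"
      "collinear L c b'"
    using third_point_collinear[OF b r_perp(2,4) pts(4) cr nc_c(2)] .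
  have a'P: "a' \<in> P" and b'P: "b' \<in> P"
    using la(1,4) lb(1,4) line_subset by blast+
  have "p \<notin> perp P L r" "q \<notin> perp P L r"
    using ncpq(2,3) mem_perp_iff_collinear[OF pts(3)] pts(1,2) by (simp_all add: collinear_commute)
  moreover have "p \<in> perp P L a" "q \<in> perp P L a" "p \<in> perp P L b" "q \<in> perp P L b"
    using p q by simp_all
  ultimately have nc_pq: "\<not> collinear L p a'" "\<not> collinear L q a'"
      "\<not> collinear L p b'" "\<not> collinear L q b'"
    using not_collinear_if_perp_on_line[OF la(1-4) la(5)[symmetric]]
      not_collinear_if_perp_on_line[OF lb(1-4) lb(5)[symmetric]]
    by simp_all
  have "\<not> collinear L b a'"
    using not_collinear_if_perp_on_line[OF la(1,3,2,4) la(6)[symmetric]]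
      perp_sym[OF b r_perp(2)] mem_perp_iff_collinear[OF a b] ab by blast
  then have nc_a'b': "\<not> collinear L a' b'"
    using not_collinear_if_perp_on_line[OF lb(1,3,2,4) lb(6)[symmetric]]
      perp_if_on_line[OF la(1,3,4)] mem_perp_iff_collinear[OF b a'P] by blast
  have "collinear L c p" "collinear L c q"
    using c(1) mem_perp_iff_collinear[OF pts(1,4)] mem_perp_iff_collinear[OF pts(2,4)]
    by (simp_all add: collinear_commute)
  then show False
    using no_four_noncollinear_neighbours[OF pts(4) _ _ _ la(7) lb(7) ncpq(1)
        nc_pq(1,3,2,4) nc_a'b'] pts(1,2) a'P b'P
    by blast
qed

lemma setperp_setperp2:
  assumes a: "a \<in> P" and b: "b \<in> P" and ab: "\<not> collinear L a b"
    and p: "p \<in> setperp P L {a, b}" and q: "q \<in> setperp P L {a, b}" and pq: "p \<noteq> q"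
  shows "setperp P L (setperp P L {a, b}) = setperp P L {p, q}"
proof
  show "setperp P L (setperp P L {a, b}) \<subseteq> setperp P L {p, q}"
    using p q by (intro setperp_antimono) simp
  show "setperp P L {p, q} \<subseteq> setperp P L (setperp P L {a, b})"
  proof
    fix c
    assume c: "c \<in> setperp P L {p, q}"
    have cP: "c \<in> P"
      using c by (simp add: mem_perp_iff)
    have "r \<in> perp P L c" if r: "r \<in> setperp P L {a, b}" for r
    proof -
      have rP: "r \<in> P"
        using r by (simp add: mem_perp_iff)
      consider "r = p \<or> r = q" | "c = a \<or> c = b" | "r \<noteq> p" "r \<noteq> q" "c \<noteq> a" "c \<noteq> b"
        by blast
      then show ?thesis
      proof cases
        case 1
        moreover have "c \<in> perp P L p" "c \<in> perp P L q"
          using c by simp_all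
        ultimately show ?thesis
          using perp_sym[OF rP] by blast
      next
        case 2
        then show ?thesis
          using r by auto
      next
        case 3
        then show ?thesis
          using regularity[OF a b ab p q pq r _ _ c] perp_sym[OF rP] by blast
      qed
    qed
    then show "c \<in> setperp P L (setperp P L {a, b})"
      using mem_setperp_iff_subset_perp[OF cP setperp_subset] by blast
  qed
qed

lemma setperp2_subset_perp:
  assumes u: "u \<in> P" and w: "w \<in> P" and uw: "u \<noteq> w"
    and XYZ: "X \<in> setperp P L {u, w}" "Y \<in> setperp P L {u, w}" "Z \<in> setperp P L {u, w}"
    and YZ: "Y \<noteq> Z"
  shows "setperp P L {Y, Z} \<subseteq> perp P L X"
proof (cases "collinear L u w")
  case True
  define l where "l = line_through u w"
  have l: "l \<in> L" "u \<in> l" "w \<in> l"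
    unfolding l_def using line_through[OF True uw] by simp_all
  have "X \<in> l" "Y \<in> l" "Z \<in> l"
    using XYZ mem_line_if_perp_two[OF l uw] by simp_all
  then show ?thesis
    using mem_line_if_perp_two[OF l(1) _ _ YZ] perp_if_on_line[OF l(1)] by auto
next
  case False
  then have "setperp P L {Y, Z} = setperp P L (setperp P L {u, w})"
    using setperp_setperp2[OF u w False XYZ(2,3) YZ] by simp
  then show ?thesis
    using XYZ(1) unfolding setperp_def by blast
qed

lemma complete_triad_setperp2:
  assumes a: "a \<in> P" and b: "b \<in> P" and ab: "\<not> collinear L a b"
  shows "complete_triad P L (setperp P L {a, b})"
proof -
  let ?D = "setperp P L {a, b}"
  have card_D: "card ?D = 3"
    using card_setperp2[OF a b ab] .
  have noncol: "\<not> collinear L y z" if "y \<in> ?D" "z \<in> ?D" "y \<noteq> z" for y z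
    using setperp2_noncollinear[OF a b ab that] .
  obtain p q where pq: "p \<in> ?D" "q \<in> ?D" "p \<noteq> q"
    using card_3_avoid_two[OF card_D] by metis
  have "p \<in> P" "q \<in> P"
    using pq by (simp_all add: mem_perp_iff)
  then have "card (setperp P L ?D) = 3"
    using setperp_setperp2[OF a b ab pq] card_setperp2 noncol[OF pq] by simp
  then show ?thesis
    unfolding complete_triad_def triad_def
    using setperp_subset[of P L "{a, b}"] card_D noncol by (intro conjI ballI impI)
qed

lemma complete_triad_setperp:
  assumes T: "complete_triad P L T"
  shows "complete_triad P L (setperp P L T)"
proof -
  have TP: "T \<subseteq> P" and card_T: "card T = 3" and card_perp: "card (setperp P L T) = 3"
    and noncol: "\<And>a b. a \<in> T \<Longrightarrow> b \<in> T \<Longrightarrow> a \<noteq> b \<Longrightarrow> \<not> collinear L a b"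
    using T unfolding complete_triad_def triad_def by auto
  obtain a b where ab: "a \<in> T" "b \<in> T" "a \<noteq> b"
    using card_3_avoid_two[OF card_T] by metis
  have ncab: "\<not> collinear L a b" and abP: "a \<in> P" "b \<in> P"
    using noncol[OF ab] ab TP by auto
  have "setperp P L T \<subseteq> setperp P L {a, b}"
    using ab by (intro setperp_antimono) simp
  moreover have "card (setperp P L {a, b}) = 3"
    using card_setperp2[OF abP ncab] .
  ultimately have "setperp P L T = setperp P L {a, b}"
    using card_perp by (intro card_seteq) (auto intro: card_ge_0_finite)
  then show ?thesis
    using complete_triad_setperp2[OF abP ncab] by simp
qed

end

section \<open>Adjacency through lines and complete triads\<close>

definition line_or_complete_triad :: "'a set \<Rightarrow> 'a set set \<Rightarrow> 'a set \<Rightarrow> bool" where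
  "line_or_complete_triad P L T \<longleftrightarrow> T \<in> L \<or> complete_triad P L T"

text \<open>The adjacency of \<S>, expressed inside S' (see \<open>bigAdj_iff\<close>).\<close>
definition perp_pair_adj :: "'a set \<Rightarrow> 'a set set \<Rightarrow> 'a \<Rightarrow> 'a \<Rightarrow> 'a \<Rightarrow> 'a \<Rightarrow> bool" where
  "perp_pair_adj P L a p b q \<longleftrightarrow>
    (\<exists>T. line_or_complete_triad P L T \<and> a \<in> T \<and> b \<in> T \<and> a \<noteq> b \<and>
      p \<in> setperp P L T \<and> q \<in> setperp P L T \<and> p \<noteq> q)"

lemma perp_pair_adjI:
  "line_or_complete_triad P L T \<Longrightarrow> a \<in> T \<Longrightarrow> b \<in> T \<Longrightarrow> a \<noteq> b \<Longrightarrow>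
    p \<in> setperp P L T \<Longrightarrow> q \<in> setperp P L T \<Longrightarrow> p \<noteq> q \<Longrightarrow> perp_pair_adj P L a p b q"
  unfolding perp_pair_adj_def by blast

lemma perp_pair_adjE:
  assumes "perp_pair_adj P L a p b q"
  obtains T where "line_or_complete_triad P L T" "a \<in> T" "b \<in> T" "a \<noteq> b"
    "p \<in> setperp P L T" "q \<in> setperp P L T" "p \<noteq> q"
  using assms unfolding perp_pair_adj_def by blast

lemma perp_pair_adj_perp: "perp_pair_adj P L a p b q \<Longrightarrow> q \<in> perp P L a"
  unfolding perp_pair_adj_def setperp_def by blast

context gq22_geom
begin

lemma line_or_complete_triad_cards:
  assumes "line_or_complete_triad P L T"
  shows "T \<subseteq> P" "card T = 3" "card (setperp P L T) = 3"
  using assms line_subset card_line setperp_line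
  unfolding line_or_complete_triad_def complete_triad_def triad_def by auto

lemma perp_pair_adj_points: "perp_pair_adj P L a p b q \<Longrightarrow> a \<in> P \<and> b \<in> P"
  by (elim perp_pair_adjE) (use line_or_complete_triad_cards(1) in blast)

lemma line_perp_pair_adj:
  "l \<in> L \<Longrightarrow> a \<in> l \<Longrightarrow> b \<in> l \<Longrightarrow> p \<in> l \<Longrightarrow> q \<in> l \<Longrightarrow> a \<noteq> b \<Longrightarrow> p \<noteq> q \<Longrightarrow>
    perp_pair_adj P L a p b q"
  by (rule perp_pair_adjI[of P L l]) (simp_all add: line_or_complete_triad_def setperp_line)

lemma perp_pair_path2:
  assumes T: "line_or_complete_triad P L T" and "a \<in> T" "b \<in> T"
    and "p \<in> setperp P L T" "q \<in> setperp P L T"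
  shows "\<exists>c r. perp_pair_adj P L a p c r \<and> perp_pair_adj P L c r b q"
proof -
  obtain c where "c \<in> T" "c \<noteq> a" "c \<noteq> b"
    using card_3_avoid_two[OF line_or_complete_triad_cards(2)[OF T]] .
  moreover obtain r where "r \<in> setperp P L T" "r \<noteq> p" "r \<noteq> q"
    using card_3_avoid_two[OF line_or_complete_triad_cards(3)[OF T]] .
  ultimately show ?thesis
    using assms perp_pair_adjI[of P L T] by metis
qed

lemma line_perp_pair_path2:
  assumes "l \<in> L" "a \<in> l" "b \<in> l" "p \<in> l" "q \<in> l"
  shows "\<exists>c r. perp_pair_adj P L a p c r \<and> perp_pair_adj P L c r b q"
  using perp_pair_path2[of l a b p q] assms setperp_line by (simp add: line_or_complete_triad_def)

lemma no_perp_pair_path2: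
  assumes "u \<in> perp P L Y" "v \<notin> perp P L X"
    and "perp_pair_adj P L X u Z w" "perp_pair_adj P L Z w Y v"
  shows False
proof -
  obtain T1 where T1: "line_or_complete_triad P L T1" "X \<in> T1" "Z \<in> T1" "X \<noteq> Z"
      "u \<in> setperp P L T1" "w \<in> setperp P L T1" "u \<noteq> w"
    using assms(3) by (rule perp_pair_adjE)
  obtain T2 where T2: "line_or_complete_triad P L T2" "Z \<in> T2" "Y \<in> T2" "Z \<noteq> Y"
      "w \<in> setperp P L T2" "v \<in> setperp P L T2" "w \<noteq> v"
    using assms(4) by (rule perp_pair_adjE)
  have pts: "X \<in> P" "Y \<in> P" "Z \<in> P" "u \<in> P" "w \<in> P"
    using T1(2,3,5,6) T2(3) line_or_complete_triad_cards(1)[OF T1(1)]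
      line_or_complete_triad_cards(1)[OF T2(1)] setperp_subset[of P L T1] by auto
  have "X \<in> setperp P L {u, w}" "Y \<in> setperp P L {u, w}" "Z \<in> setperp P L {u, w}"
    using T1(2,3,5,6) T2(3,5) assms(1) pts unfolding setperp_def by (auto simp: perp_commute)
  moreover have "v \<in> setperp P L {Y, Z}"
    using T2 unfolding setperp_def by auto
  ultimately show False
    using setperp2_subset_perp[OF pts(4,5) T1(7)] T2(4) assms(2) by blast
qed

lemma perp_pair_path3_collinear:
  assumes X: "X \<in> P" and Y: "Y \<in> P" and XY: "X \<noteq> Y" and col: "collinear L X Y"
    and u: "u \<in> perp P L X" "u \<in> perp P L Y" and v: "v \<in> perp P L Y" "v \<notin> perp P L X"
  shows "\<exists>a p b q. perp_pair_adj P L X u a p \<and> perp_pair_adj P L a p b q \<and> perp_pair_adj P L b q Y v"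
proof -
  define m where "m = line_through X Y"
  have m: "m \<in> L" "X \<in> m" "Y \<in> m"
    unfolding m_def using line_through[OF col XY] by simp_all
  have u_m: "u \<in> m"
    using mem_line_if_perp_two[OF m XY u] .
  have vP: "v \<in> P"
    using v(1) by (simp add: mem_perp_iff)
  have Xv: "\<not> collinear L X v"
    using v(2) mem_perp_iff_collinear[OF X vP] by simp
  show ?thesis
  proof (cases "u = Y")
    case False
    have "Y \<noteq> v"
      using v(2) perp_if_on_line[OF m(1,2,3)] by blast
    then have "collinear L Y v"
      using v(1) by (simp add: mem_perp_iff)
    then obtain n where n: "n \<in> L" "Y \<in> n" "v \<in> n"
      unfolding collinear_def by blast
    have "perp_pair_adj P L X u Y Y"
      using line_perp_pair_adj[OF m(1,2,3) u_m m(3) XY False] .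
    moreover obtain c r where "perp_pair_adj P L Y Y c r" "perp_pair_adj P L c r Y v"
      using line_perp_pair_path2[OF n(1,2,2,2,3)] by blast
    ultimately show ?thesis
      by blast
  next
    case True
    let ?D = "setperp P L {X, v}"
    have D: "line_or_complete_triad P L ?D"
      using complete_triad_setperp2[OF X vP Xv] by (simp add: line_or_complete_triad_def)
    have "Y \<in> ?D"
      using v(1) perp_if_on_line[OF m(1,3,2)] X Y vP by (simp add: perp_commute)
    moreover have "X \<in> setperp P L ?D" "v \<in> setperp P L ?D"
      using subset_setperp_setperp[of "{X, v}" P L] X vP by auto
    ultimately obtain c r where "perp_pair_adj P L Y X c r" "perp_pair_adj P L c r Y v"
      using perp_pair_path2[OF D] by blast
    moreover have "perp_pair_adj P L X u Y X"
      using line_perp_pair_adj[OF m(1,2,3) u_m m(2) XY] True XY by simp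
    ultimately show ?thesis
      by blast
  qed
qed

lemma perp_pair_path3_through_triad:
  assumes X: "X \<in> P" and Y: "Y \<in> P" and XY: "\<not> collinear L X Y"
    and u: "u \<in> perp P L X" "u \<in> perp P L Y" and n: "n \<in> L" "Y \<in> n" "v \<in> n" "u \<notin> n"
  shows "\<exists>a p b q. perp_pair_adj P L X u a p \<and> perp_pair_adj P L a p b q \<and> perp_pair_adj P L b q Y v"
proof -
  let ?D = "setperp P L {X, Y}"
  let ?T = "setperp P L ?D"
  have "X \<notin> n"
    using XY n(1,2) unfolding collinear_def by blast
  then obtain t where t: "t \<in> n" "collinear L X t"
    using ex1_collinear_on_line[OF X n(1)] by blast
  have "t \<in> P"
    using t(1) n(1) line_subset by blast
  then have t_D: "t \<in> ?D"
    using t perp_if_on_line[OF n(1,2)] by (simp add: mem_perp_iff)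
  have T: "line_or_complete_triad P L ?T"
    using complete_triad_setperp[OF complete_triad_setperp2[OF X Y XY]]
    by (simp add: line_or_complete_triad_def)
  have "X \<in> ?T" "Y \<in> ?T"
    using subset_setperp_setperp[of "{X, Y}" P L] X Y by auto
  moreover have "u \<in> setperp P L ?T" "t \<in> setperp P L ?T"
    using subset_setperp_setperp[OF setperp_subset[of P L "{X, Y}"]] u t_D by auto
  moreover have "u \<noteq> t"
    using n(4) t(1) by blast
  ultimately have "perp_pair_adj P L X u Y t"
    using perp_pair_adjI[OF T] XY collinear_refl[OF X] by metis
  moreover obtain c r where "perp_pair_adj P L Y t c r" "perp_pair_adj P L c r Y v"
    using line_perp_pair_path2[OF n(1,2,2) t(1) n(3)] by blast
  ultimately show ?thesis
    by blast
qed

lemma perp_pair_path3_noncollinear: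
  assumes X: "X \<in> P" and Y: "Y \<in> P" and XY: "\<not> collinear L X Y"
    and u: "u \<in> perp P L X" "u \<in> perp P L Y" and v: "v \<in> perp P L Y" "v \<notin> perp P L X"
  shows "\<exists>a p b q. perp_pair_adj P L X u a p \<and> perp_pair_adj P L a p b q \<and> perp_pair_adj P L b q Y v"
proof -
  have "u \<in> setperp P L {X, Y}"
    using u by simp
  then have uX: "u \<noteq> X" "u \<noteq> Y"
    using setperp2_neq[OF X XY] by blast+
  show ?thesis
  proof (cases "\<exists>n \<in> L. Y \<in> n \<and> v \<in> n \<and> u \<in> n")
    case True
    then obtain n where n: "n \<in> L" "Y \<in> n" "v \<in> n" "u \<in> n"
      by blast
    define h where "h = line_through X u"
    have h: "h \<in> L" "X \<in> h" "u \<in> h"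
      unfolding h_def using line_through u(1) uX(1) by (simp_all add: mem_perp_iff)
    obtain c r where "perp_pair_adj P L X u c r" "perp_pair_adj P L c r u u"
      using line_perp_pair_path2[OF h(1,2,3,3,3)] by blast
    moreover have "perp_pair_adj P L u u Y v"
      using line_perp_pair_adj[OF n(1,4,2,4,3)] uX(2) u(1) v(2) by blast
    ultimately show ?thesis
      by blast
  next
    case False
    have "collinear L Y u"
      using u(2) uX(2) by (simp add: mem_perp_iff collinear_commute)
    then have "v \<noteq> Y"
      using False line_through[of Y u] uX(2) by metis
    then have "collinear L Y v"
      using v(1) by (simp add: mem_perp_iff)
    then obtain n where n: "n \<in> L" "Y \<in> n" "v \<in> n"
      unfolding collinear_def by blast
    then show ?thesis
      using perp_pair_path3_through_triad[OF X Y XY u n] False by blast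
  qed
qed

lemma perp_pair_path3:
  assumes "X \<in> P" "Y \<in> P" "X \<noteq> Y" "u \<in> perp P L X" "u \<in> perp P L Y"
    "v \<in> perp P L Y" "v \<notin> perp P L X"
  shows "\<exists>a p b q. perp_pair_adj P L X u a p \<and> perp_pair_adj P L a p b q \<and> perp_pair_adj P L b q Y v"
  using assms perp_pair_path3_collinear perp_pair_path3_noncollinear by (cases "collinear L X Y") auto

end

section \<open>Transfer along the isomorphism\<close>

lemma mem_bigPoints_iff [simp]: "(a, p) \<in> bigPoints P L P' L' f \<longleftrightarrow> a \<in> P \<and> p \<in> perp P' L' (f a)"
  unfolding bigPoints_def by simp

lemma sym_bigAdj: "sym (bigAdj P L P' L' f)"
  unfolding bigAdj_def sym_def by blast

locale gq22_iso = S: gq22_geom P L + S': gq22_geom P' L'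
  for P :: "'p set" and L :: "'p set set" and P' :: "'q set" and L' :: "'q set set" +
  fixes f :: "'p \<Rightarrow> 'q"
  assumes iso: "geom_iso f P L P' L'"
begin

lemma inj_f: "inj_on f P"
  and image_points: "f ` P = P'"
  and image_lines: "(\<lambda>l. f ` l) ` L = L'"
  using iso unfolding geom_iso_def bij_betw_def by auto

lemma f_in_points: "a \<in> P \<Longrightarrow> f a \<in> P'"
  unfolding image_points[symmetric] by (rule imageI)

lemma collinear_iso:
  assumes "a \<in> P" "b \<in> P"
  shows "collinear L' (f a) (f b) \<longleftrightarrow> collinear L a b"
proof
  assume "collinear L' (f a) (f b)"
  then obtain l where l: "l \<in> L" "f a \<in> f ` l" "f b \<in> f ` l"
    using image_lines unfolding collinear_def by blast
  then have "a \<in> l" "b \<in> l"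
    using inj_on_image_mem_iff[OF inj_f _ S.line_subset[OF l(1)]] assms by blast+
  then show "collinear L a b"
    using l(1) unfolding collinear_def by blast
next
  assume "collinear L a b"
  then show "collinear L' (f a) (f b)"
    using image_lines unfolding collinear_def by blast
qed

lemma perp_iso:
  assumes "a \<in> P" "b \<in> P"
  shows "f b \<in> perp P' L' (f a) \<longleftrightarrow> b \<in> perp P L a"
proof -
  have "f b = f a \<longleftrightarrow> b = a"
    using inj_on_eq_iff[OF inj_f assms(2,1)] .
  then show ?thesis
    unfolding mem_perp_iff collinear_iso[OF assms] using assms(2) f_in_points by simp
qed

lemma setperp_iso:
  assumes T: "T \<subseteq> P"
  shows "setperp P' L' (f ` T) = f ` setperp P L T"
proof
  show "setperp P' L' (f ` T) \<subseteq> f ` setperp P L T"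
  proof
    fix y
    assume y: "y \<in> setperp P' L' (f ` T)"
    then have "y \<in> f ` P"
      unfolding image_points using subsetD[OF setperp_subset] by simp
    then obtain b where b: "b \<in> P" "y = f b"
      by blast
    have "b \<in> perp P L t" if "t \<in> T" for t
      using y b that subsetD[OF T] perp_iso[of t b] unfolding setperp_def by auto
    then show "y \<in> f ` setperp P L T"
      using b unfolding setperp_def by blast
  qed
  show "f ` setperp P L T \<subseteq> setperp P' L' (f ` T)"
  proof
    fix y
    assume "y \<in> f ` setperp P L T"
    then obtain b where b: "b \<in> setperp P L T" "y = f b"
      by blast
    have bP: "b \<in> P"
      using subsetD[OF setperp_subset b(1)] .
    have "f b \<in> perp P' L' (f t)" if "t \<in> T" for t
      using b(1) that subsetD[OF T] perp_iso[OF _ bP] unfolding setperp_def by auto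
    then show "y \<in> setperp P' L' (f ` T)"
      using b(2) f_in_points[OF bP] unfolding setperp_def by blast
  qed
qed

lemma line_iso:
  assumes "T \<subseteq> P"
  shows "f ` T \<in> L' \<longleftrightarrow> T \<in> L"
proof
  assume "f ` T \<in> L'"
  then obtain l where "l \<in> L" "f ` T = f ` l"
    unfolding image_lines[symmetric] by blast
  then show "T \<in> L"
    using inj_on_image_eq_iff[OF inj_f assms S.line_subset] by simp
next
  assume "T \<in> L"
  then show "f ` T \<in> L'"
    unfolding image_lines[symmetric] by (rule imageI)
qed

lemma complete_triad_iso:
  assumes T: "T \<subseteq> P"
  shows "complete_triad P' L' (f ` T) \<longleftrightarrow> complete_triad P L T"
proof -
  have "f ` T \<subseteq> P'"
    using T f_in_points by blast
  moreover have "card (f ` T) = card T"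
    using card_image inj_on_subset[OF inj_f T] by blast
  moreover have "card (setperp P' L' (f ` T)) = card (setperp P L T)"
    using setperp_iso[OF T] card_image inj_on_subset[OF inj_f setperp_subset] by metis
  moreover have "(\<forall>x\<in>f ` T. \<forall>y\<in>f ` T. x \<noteq> y \<longrightarrow> \<not> collinear L' x y) \<longleftrightarrow>
      (\<forall>a\<in>T. \<forall>b\<in>T. a \<noteq> b \<longrightarrow> \<not> collinear L a b)"
  proof -
    have "(f a \<noteq> f b \<longrightarrow> \<not> collinear L' (f a) (f b)) \<longleftrightarrow> (a \<noteq> b \<longrightarrow> \<not> collinear L a b)"
      if "a \<in> T" "b \<in> T" for a b
      using that subsetD[OF T] collinear_iso inj_on_eq_iff[OF inj_f] by simp
    then show ?thesis
      by simp
  qed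
  ultimately show ?thesis
    using T unfolding complete_triad_def triad_def by simp
qed

lemma line_or_complete_triad_iso:
  "T \<subseteq> P \<Longrightarrow> line_or_complete_triad P' L' (f ` T) \<longleftrightarrow> line_or_complete_triad P L T"
  unfolding line_or_complete_triad_def using line_iso complete_triad_iso by simp

lemma bigAdj_perp_pair_adj:
  assumes "((a, p), (b, q)) \<in> bigAdj P L P' L' f"
  shows "a \<in> P \<and> b \<in> P \<and> perp_pair_adj P' L' (f a) p (f b) q"
proof -
  obtain l where l: "l \<in> bigLines P L P' L' f" "(a, p) \<in> l" "(b, q) \<in> l"
      and ne: "(a, p) \<noteq> (b, q)"
    using assms unfolding bigAdj_def by blast
  from l(1) obtain x y z u v w where
      l_eq: "l = {(x, u), (y, v), (z, w)}" and xyz: "distinct [x, y, z]"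
      and T: "line_or_complete_triad P L {x, y, z}" and uvw: "distinct [u, v, w]"
      and perp_T: "{u, v, w} = setperp P' L' (f ` {x, y, z})"
      and pts: "{(x, u), (y, v), (z, w)} \<subseteq> bigPoints P L P' L' f"
    unfolding bigLines_def line_or_complete_triad_def mem_Collect_eq by (elim exE conjE) simp
  note ap = l(2)[unfolded l_eq] and bq = l(3)[unfolded l_eq]
  have xyzP: "{x, y, z} \<subseteq> P"
    using pts by simp
  have ab: "a \<in> {x, y, z}" "b \<in> {x, y, z}" "a \<noteq> b" "p \<in> {u, v, w}" "q \<in> {u, v, w}" "p \<noteq> q"
    using ap bq ne xyz uvw by auto
  then have "f a \<noteq> f b"
    using inj_on_eq_iff[OF inj_f] xyzP by blast
  moreover have "line_or_complete_triad P' L' (f ` {x, y, z})"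
    using line_or_complete_triad_iso[OF xyzP] T by simp
  ultimately have "perp_pair_adj P' L' (f a) p (f b) q"
    using ab perp_T by (intro perp_pair_adjI[of P' L' "f ` {x, y, z}"]) auto
  then show ?thesis
    using ab xyzP by blast
qed

lemma perp_pair_adj_bigAdj:
  assumes a: "a \<in> P" and b: "b \<in> P" and adj: "perp_pair_adj P' L' (f a) p (f b) q"
  shows "((a, p), (b, q)) \<in> bigAdj P L P' L' f"
proof -
  obtain T' where T': "line_or_complete_triad P' L' T'" "f a \<in> T'" "f b \<in> T'" "f a \<noteq> f b"
      "p \<in> setperp P' L' T'" "q \<in> setperp P' L' T'" "p \<noteq> q"
    using adj by (rule perp_pair_adjE)
  obtain c' where c': "T' = {f a, f b, c'}" "c' \<noteq> f a" "c' \<noteq> f b"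
    using card_3_obtain_third[OF S'.line_or_complete_triad_cards(2)[OF T'(1)] T'(2-4)] .
  obtain r where r: "setperp P' L' T' = {p, q, r}" "r \<noteq> p" "r \<noteq> q"
    using card_3_obtain_third[OF S'.line_or_complete_triad_cards(3)[OF T'(1)] T'(5-7)] .
  have "c' \<in> f ` P"
    unfolding image_points using S'.line_or_complete_triad_cards(1)[OF T'(1)] c'(1) by blast
  then obtain c where c: "c \<in> P" "c' = f c"
    by blast
  have fT: "f ` {a, b, c} = T'"
    using c'(1) c(2) by simp
  have distinct: "distinct [a, b, c]" "distinct [p, q, r]"
    using T'(4,7) c'(2,3) c(2) r(2,3) by auto
  have T: "line_or_complete_triad P L {a, b, c}"
    using line_or_complete_triad_iso[of "{a, b, c}"] fT T'(1) a b c(1) by simp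
  have perp_T: "{p, q, r} = setperp P' L' (f ` {a, b, c})"
    using r(1) fT by simp
  have pts: "{(a, p), (b, q), (c, r)} \<subseteq> bigPoints P L P' L' f"
    using T'(2,3,5,6) r(1) c'(1) c a b unfolding setperp_def by auto
  have "{(a, p), (b, q), (c, r)} \<in> bigLines P L P' L' f"
    unfolding bigLines_def mem_Collect_eq
    by (rule exI[of _ a], rule exI[of _ b], rule exI[of _ c],
        rule exI[of _ p], rule exI[of _ q], rule exI[of _ r])
      (use distinct T perp_T pts in \<open>simp add: line_or_complete_triad_def\<close>)
  then show ?thesis
    using T'(4) unfolding bigAdj_def by auto
qed

lemma bigAdj_iff:
  "((a, p), (b, q)) \<in> bigAdj P L P' L' f \<longleftrightarrow> a \<in> P \<and> b \<in> P \<and> perp_pair_adj P' L' (f a) p (f b) q"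
  using bigAdj_perp_pair_adj perp_pair_adj_bigAdj by blast

lemma bigAdj_dist_3:
  assumes xu: "(x, u) \<in> bigPoints P L P' L' f" and yv: "(y, v) \<in> bigPoints P L P' L' f"
    and "x \<noteq> y" and uy: "u \<in> perp P' L' (f y)" and vx: "v \<notin> perp P' L' (f x)"
  shows "graph_dist_is (bigAdj P L P' L' f) (x, u) (y, v) 3"
proof (rule graph_dist_is_3I)
  let ?E = "bigAdj P L P' L' f"
  show "(x, u) \<noteq> (y, v)"
    using \<open>x \<noteq> y\<close> by simp
  show "((x, u), (y, v)) \<notin> ?E"
  proof
    assume "((x, u), (y, v)) \<in> ?E"
    then have "perp_pair_adj P' L' (f x) u (f y) v"
      by (simp add: bigAdj_iff)
    then show False
      using perp_pair_adj_perp vx by metis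
  qed
  show "((x, u), (y, v)) \<notin> ?E O ?E"
  proof
    assume "((x, u), (y, v)) \<in> ?E O ?E"
    then obtain z w where "((x, u), (z, w)) \<in> ?E" "((z, w), (y, v)) \<in> ?E"
      by auto
    then have "perp_pair_adj P' L' (f x) u (f z) w" "perp_pair_adj P' L' (f z) w (f y) v"
      by (simp_all add: bigAdj_iff)
    then show False
      by (rule S'.no_perp_pair_path2[OF uy vx])
  qed
  have x: "x \<in> P" "u \<in> perp P' L' (f x)" and y: "y \<in> P" "v \<in> perp P' L' (f y)"
    using xu yv by simp_all
  have "f x \<noteq> f y"
    using inj_on_eq_iff[OF inj_f x(1) y(1)] \<open>x \<noteq> y\<close> by simp
  then obtain a p b q where path: "perp_pair_adj P' L' (f x) u a p"
      "perp_pair_adj P' L' a p b q" "perp_pair_adj P' L' b q (f y) v"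
    using S'.perp_pair_path3[OF f_in_points[OF x(1)] f_in_points[OF y(1)] _ x(2) uy y(2) vx] by blast
  have "a \<in> f ` P" "b \<in> f ` P"
    unfolding image_points using S'.perp_pair_adj_points[OF path(2)] by simp_all
  then obtain a0 b0 where "a0 \<in> P" "a = f a0" "b0 \<in> P" "b = f b0"
    by blast
  then have "((x, u), (a0, p)) \<in> ?E" "((a0, p), (b0, q)) \<in> ?E" "((b0, q), (y, v)) \<in> ?E"
    using path x(1) y(1) bigAdj_iff by simp_all
  then show "((x, u), (y, v)) \<in> ?E O ?E O ?E"
    by blast
qed

end

theorem lemma3p3:
  fixes P :: "'p set" and L :: "'p set set" and P' :: "'q set" and L' :: "'q set set"
    and f :: "'p \<Rightarrow> 'q" and x y :: 'p and u v :: 'q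
  assumes "gq22 P L" and "gq22 P' L'" and "geom_iso f P L P' L'"
    and "(x, u) \<in> bigPoints P L P' L' f" and "(y, v) \<in> bigPoints P L P' L' f"
    and "x \<noteq> y" and "u \<noteq> v"
    and "(u \<in> perp P' L' (f y) \<and> v \<notin> perp P' L' (f x)) \<or>
         (u \<notin> perp P' L' (f y) \<and> v \<in> perp P' L' (f x))"
  shows "graph_dist_is (bigAdj P L P' L' f) (x, u) (y, v) 3"
proof -
  \<comment> \<open>The hypothesis \<open>u \<noteq> v\<close> is implied by the others and not needed.\<close>
  interpret gq22_iso P L P' L' f
    using assms(1-3) by unfold_locales
  from assms(8) show ?thesis
  proof
    assume "u \<in> perp P' L' (f y) \<and> v \<notin> perp P' L' (f x)"
    then show ?thesis
      using bigAdj_dist_3[OF assms(4-6)] by blast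
  next
    assume "u \<notin> perp P' L' (f y) \<and> v \<in> perp P' L' (f x)"
    then have "graph_dist_is (bigAdj P L P' L' f) (y, v) (x, u) 3"
      using bigAdj_dist_3[OF assms(5,4)] assms(6) by blast
    then show ?thesis
      using graph_dist_is_sym[OF sym_bigAdj] by blast
  qed
qed

end
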